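(* Let $p(x) \in \mathbb{R}[x]$ be a real-rooted polynomial of degree $n \geq 2$ with positive leading coefficient, and let $\mu_1 \leq \mu_2 \leq \dots \leq \mu_n$ be its roots (with multiplicity). Let $P(x) = \int_0^x p(y)\,dy$. Let $h_1 \leq \dots \leq h_n$ be real numbers such that the multisets $\{h_1, \dots, h_n\}$ and $\{-P(\mu_1), \dots, -P(\mu_n)\}$ are equal. Let $k = \lfloor n/2 \rfloor$ and let $h$ be a real number with $h_k \leq h \leq h_{k+1}$. Suppose that $P(x)+h$ is real-rooted, and let $C$ be a real number. Then $P(x)+C$ is real-rooted if and only if $h_k \leq C \leq h_{k+1}$.
   Context: A nonzero polynomial in $\mathbb{R}[x]$ is called real-rooted if all of its complex roots are real. *)

theory Defs
  imports "HOL-Computational_Algebra.Polynomial"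
begin

definition real_rooted :: "real poly \<Rightarrow> bool" where
  "real_rooted p \<longleftrightarrow> p \<noteq> 0 \<and>
     (\<forall>z::complex. poly (map_poly of_real p) z = 0 \<longrightarrow> z \<in> \<real>)"

text \<open>The antiderivative P(x) = int_0^x p(y) dy, as a polynomial:
  coefficient i+1 of P is coeff p i / (i+1), constant term 0.\<close>
definition poly_antideriv :: "real poly \<Rightarrow> real poly" where
  "poly_antideriv p = pCons 0 (Poly (map (\<lambda>i. coeff p i / real (Suc i)) [0..<Suc (degree p)]))"

end

theory Submission
  imports Defs "HOL-Computational_Algebra.Fundamental_Theorem_Algebra"
begin

text \<open>Write Q = P + C, so that Q' = p has the roots mu_1 <= ... <= mu_n. Counted with
  multiplicity, Rolle's theorem lets Q have at most one root more than Q' on any interval. So if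
  the degree n + 1 polynomial Q is real-rooted and Q(mu_i) <> 0, exactly n - i + 1 of its roots
  exceed mu_i, which fixes the sign: (-1)^(n-i) Q(mu_i) <= 0. Conversely, under this sign pattern
  the intermediate value theorem gives a root of Q between neighbouring critical points at which Q
  does not vanish and one beyond each end, while a critical point of multiplicity m where Q
  vanishes is a root of multiplicity m + 1; altogether Q has n + 1 real roots.

  With g_i = - P(mu_i), the sign pattern for Q = P + C says g_i <= C for the n div 2 indices with
  n - i odd and C <= g_i for the others. Real-rootedness of P + h shows that the first group
  consists of the n div 2 smallest values of g, so the condition means exactly
  h_(n div 2) <= C <= h_(n div 2 + 1).\<close>

lemma size_filter_image_mset_set:
  "finite A \<Longrightarrow> size {#x \<in># image_mset f (mset_set A). P x#} = card {a \<in> A. P (f a)}"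
  by (simp add: filter_mset_image_mset)

lemma card_eq_size_filter_mset_map_upt:
  "card {j \<in> {1..n}. P (f j)} = size {#x \<in># mset (map f [1..<Suc n]). P x#}"
  by (simp add: mset_map mset_upt atLeastLessThanSuc_atLeastAtMost size_filter_image_mset_set
      del: upt_Suc)

lemma size_filter_mset_mono:
  "(\<And>x. P x \<Longrightarrow> R x) \<Longrightarrow> size {#x \<in># M. P x#} \<le> size {#x \<in># M. R x#}"
  by (induction M) auto

lemma size_filter_mset_insert:
  "b \<notin> A \<Longrightarrow> size {#x \<in># M. x \<in> insert b A#} = size {#x \<in># M. x \<in> A#} + count M b"
  by (induction M) auto

lemma size_filter_mset_atMost_split:
  fixes a b :: "'a::linorder"
  assumes "a < b"
  shows "size {#x \<in># M. x \<le> b#}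
    = size {#x \<in># M. x \<le> a#} + size {#x \<in># M. a < x \<and> x < b#} + count M b"
  using assms by (induction M) auto

lemma size_filter_mset_atLeastAtMost_split:
  fixes a b :: "'a::linorder"
  assumes "lo \<le> a" "a < b"
  shows "size {#x \<in># M. lo \<le> x \<and> x \<le> b#}
    = size {#x \<in># M. lo \<le> x \<and> x \<le> a#} + size {#x \<in># M. a < x \<and> x < b#} + count M b"
  using assms by (induction M) auto

lemma size_filter_mset_less_greater:
  fixes a :: "'a::linorder"
  shows "size M = size {#x \<in># M. x < a#} + size {#x \<in># M. a < x#} + count M a"
  by (induction M) auto

section \<open>Real-rooted polynomials\<close>

lemma lead_coeff_prod_mset_linear:
  fixes M :: "'a::idom multiset"
  shows "lead_coeff (\<Prod>x\<in>#M. [:-x, 1:]) = 1"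
  by (induction M) (simp_all del: mult_pCons_left add: lead_coeff_mult)

lemma degree_prod_mset_linear:
  fixes M :: "'a::idom multiset"
  shows "degree (\<Prod>x\<in>#M. [:-x, 1:]) = size M"
proof (induction M)
  case (add x M)
  have "(\<Prod>x\<in>#M. [:-x, 1:]) \<noteq> 0"
    using lead_coeff_prod_mset_linear[of M] by auto
  with add show ?case
    by (simp del: mult_pCons_left add: degree_mult_eq)
qed simp

lemma linear_factors_times_root_free:
  fixes p :: "'a::idom poly"
  assumes "p \<noteq> 0"
  shows "\<exists>r. p = (\<Prod>x\<in>#proots p. [:-x, 1:]) * r \<and> (\<forall>x. poly r x \<noteq> 0)"
  using assms
proof (induction p rule: poly_root_order_induct)
  case (no_roots p)
  then have "proots p = {#}"
    by (simp add: multiset_eqI order_root)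
  then show ?case
    using no_roots by simp
next
  case (root p x n)
  then obtain r where "p = (\<Prod>x\<in>#proots p. [:-x, 1:]) * r" "\<forall>x. poly r x \<noteq> 0"
    by auto
  moreover have "proots ([:-x, 1:] ^ n * p) = replicate_mset n x + proots p"
    using root by (simp add: proots_mult proots_power)
  ultimately show ?case
    by (intro exI[of _ r]) (simp add: mult.assoc)
qed simp

lemma map_poly_of_real_mult:
  "map_poly (of_real :: real \<Rightarrow> complex) (p * q) = map_poly of_real p * map_poly of_real q"
  by (simp add: poly_eq_iff coeff_mult coeff_map_poly)

lemma poly_map_poly_of_real: "poly (map_poly of_real p) (complex_of_real x) = of_real (poly p x)"
  by (induction p) (auto simp: map_poly_pCons)

lemma poly_map_poly_of_real_linear_factors:
  "poly (map_poly of_real (\<Prod>x\<in>#M. [:-x, 1:])) z = (\<Prod>x\<in>#M. z - complex_of_real x)"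
  by (induction M) (simp_all del: mult_pCons_left add: map_poly_of_real_mult map_poly_pCons)

lemma real_rooted_linear_factors_mult_iff:
  fixes r :: "real poly"
  assumes "\<And>x. poly r x \<noteq> 0"
  shows "real_rooted ((\<Prod>x\<in>#M. [:-x, 1:]) * r) \<longleftrightarrow> degree r = 0"
proof
  assume rr: "real_rooted ((\<Prod>x\<in>#M. [:-x, 1:]) * r)"
  show "degree r = 0"
  proof (rule ccontr)
    assume "degree r \<noteq> 0"
    then have "\<not> constant (poly (map_poly complex_of_real r))"
      by (simp add: constant_degree degree_map_poly)
    then obtain z where z: "poly (map_poly complex_of_real r) z = 0"
      using fundamental_theorem_of_algebra by blast
    then have "poly (map_poly of_real ((\<Prod>x\<in>#M. [:-x, 1:]) * r)) z = 0"
      by (simp add: map_poly_of_real_mult)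
    with rr have "z \<in> \<real>"
      unfolding real_rooted_def by blast
    then obtain x where "z = of_real x"
      by (auto elim: Reals_cases)
    with z assms show False
      by (simp add: poly_map_poly_of_real)
  qed
next
  assume "degree r = 0"
  then obtain c where "r = [:c:]" "c \<noteq> 0"
    using assms by (metis degree_eq_zeroE poly_const_conv)
  then have "poly (map_poly complex_of_real r) z \<noteq> 0" for z
    by (simp add: map_poly_pCons)
  then show "real_rooted ((\<Prod>x\<in>#M. [:-x, 1:]) * r)"
    using assms
    by (auto simp: real_rooted_def map_poly_of_real_mult poly_map_poly_of_real_linear_factors
        prod_mset_zero_iff simp del: mult_pCons_left)
qed

lemma real_rooted_iff_size_proots:
  "real_rooted p \<longleftrightarrow> p \<noteq> 0 \<and> size (proots p) = degree p"
proof (cases "p = 0")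
  case False
  obtain r where p_eq: "p = (\<Prod>x\<in>#proots p. [:-x, 1:]) * r" and r: "\<And>x. poly r x \<noteq> 0"
    using linear_factors_times_root_free[OF False] by blast
  have "r \<noteq> 0"
    using r by auto
  then have "degree p = size (proots p) + degree r"
    by (subst p_eq, subst degree_mult_eq)
      (auto simp: degree_prod_mset_linear lead_coeff_prod_mset_linear)
  moreover have "real_rooted p \<longleftrightarrow> degree r = 0"
    by (subst p_eq) (rule real_rooted_linear_factors_mult_iff[OF r])
  ultimately show ?thesis
    using False by auto
qed (simp add: real_rooted_def)

lemma real_rooted_factorization:
  assumes "real_rooted p"
  shows "p = smult (lead_coeff p) (\<Prod>x\<in>#proots p. [:-x, 1:])"
proof -
  have "p \<noteq> 0" and size: "size (proots p) = degree p"
    using assms by (simp_all add: real_rooted_iff_size_proots)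
  then obtain r where p_eq: "p = (\<Prod>x\<in>#proots p. [:-x, 1:]) * r"
    using linear_factors_times_root_free by blast
  with \<open>p \<noteq> 0\<close> have "degree p = size (proots p) + degree r"
    by (metis degree_mult_eq degree_prod_mset_linear mult_zero_left mult_zero_right)
  with size obtain c where "r = [:c:]"
    by (metis add_cancel_left_right degree_eq_zeroE)
  with p_eq have "p = smult c (\<Prod>x\<in>#proots p. [:-x, 1:])"
    by simp
  moreover have "lead_coeff (smult c (\<Prod>x\<in>#proots p. [:-x, 1:])) = c"
    by (simp add: lead_coeff_prod_mset_linear)
  ultimately show ?thesis
    by metis
qed

section \<open>Rolle's theorem with multiplicities\<close>

lemma pderiv_nonzero_if_root:
  fixes Q :: "real poly"
  assumes "Q \<noteq> 0" "poly Q x = 0"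
  shows "pderiv Q \<noteq> 0"
proof
  assume "pderiv Q = 0"
  then obtain a where "Q = [:a:]"
    by (auto simp: pderiv_eq_0_iff elim: degree_eq_zeroE)
  with assms show False
    by simp
qed

lemma count_proots_pderiv:
  fixes Q :: "real poly"
  assumes "Q \<noteq> 0" "poly Q x = 0"
  shows "count (proots Q) x = Suc (count (proots (pderiv Q)) x)"
  using assms pderiv_nonzero_if_root[OF assms] by (simp add: order_pderiv)

lemma size_proots_on_finite_roots_le:
  fixes Q :: "real poly"
  assumes "Q \<noteq> 0" "finite Z" "Z \<noteq> {}" "\<And>z. z \<in> Z \<Longrightarrow> poly Q z = 0"
  shows "size {#x \<in># proots Q. x \<in> Z#}
    \<le> Suc (size {#x \<in># proots (pderiv Q). Min Z \<le> x \<and> x \<le> Max Z#})"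
  using assms(2-4)
proof (induction Z rule: finite_linorder_max_induct)
  case (insert b A)
  have count_b: "count (proots Q) b = Suc (count (proots (pderiv Q)) b)"
    by (rule count_proots_pderiv[OF \<open>Q \<noteq> 0\<close>]) (simp add: insert.prems)
  show ?case
  proof (cases "A = {}")
    case True
    have "{#x \<in># proots (pderiv Q). b \<le> x \<and> x \<le> b#} = {#x \<in># proots (pderiv Q). x = b#}"
      by (intro filter_mset_cong) auto
    with True count_b show ?thesis
      by (simp add: filter_eq_replicate_mset)
  next
    case False
    define m where "m = Max A"
    have "m \<in> A" "m < b" "Min A \<le> m"
      using False insert.hyps by (simp_all add: m_def)
    obtain w where "m < w" "w < b" "poly (pderiv Q) w = 0"
      using poly_MVT[OF \<open>m < b\<close>, of Q] insert.prems \<open>m \<in> A\<close> by auto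
    moreover have "pderiv Q \<noteq> 0"
      using \<open>Q \<noteq> 0\<close> insert.prems by (intro pderiv_nonzero_if_root) auto
    ultimately have "0 < size {#x \<in># proots (pderiv Q). m < x \<and> x < b#}"
      by (auto simp: nonempty_has_size[symmetric])
    moreover have "size {#x \<in># proots Q. x \<in> A#}
        \<le> Suc (size {#x \<in># proots (pderiv Q). Min A \<le> x \<and> x \<le> m#})"
      using insert.IH False insert.prems by (simp add: m_def)
    moreover have "b \<notin> A" and "Max (insert b A) = b"
      using insert.hyps by (auto simp: Max_insert2 less_imp_le)
    moreover have "Min (insert b A) = Min A"
      using False insert.hyps \<open>Min A \<le> m\<close> \<open>m < b\<close> by (simp add: Min_insert)
    ultimately show ?thesis
      using count_b size_filter_mset_insert[of b A "proots Q"]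
        size_filter_mset_atLeastAtMost_split[OF \<open>Min A \<le> m\<close> \<open>m < b\<close>, of "proots (pderiv Q)"]
      by simp
  qed
qed simp

lemma size_proots_on_connected_le:
  fixes Q :: "real poly"
  assumes "Q \<noteq> 0" "connected S"
  shows "size {#x \<in># proots Q. x \<in> S#} \<le> Suc (size {#x \<in># proots (pderiv Q). x \<in> S#})"
proof -
  define Z where "Z = {x \<in> S. poly Q x = 0}"
  have "finite Z"
    using poly_roots_finite[OF \<open>Q \<noteq> 0\<close>] by (rule finite_subset[rotated]) (auto simp: Z_def)
  have filter_Z: "{#x \<in># proots Q. x \<in> S#} = {#x \<in># proots Q. x \<in> Z#}"
    using \<open>Q \<noteq> 0\<close> by (intro filter_mset_cong) (auto simp: Z_def)
  show ?thesis
  proof (cases "Z = {}")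
    case False
    have "Min Z \<in> S" "Max Z \<in> S"
      using Min_in Max_in \<open>finite Z\<close> False by (auto simp: Z_def)
    then have "size {#x \<in># proots (pderiv Q). Min Z \<le> x \<and> x \<le> Max Z#}
        \<le> size {#x \<in># proots (pderiv Q). x \<in> S#}"
      using \<open>connected S\<close> by (intro size_filter_mset_mono) (meson connected_iff_interval)
    then show ?thesis
      using size_proots_on_finite_roots_le[OF \<open>Q \<noteq> 0\<close> \<open>finite Z\<close> False] filter_Z
      by (simp add: Z_def)
  qed (simp add: filter_Z)
qed

lemma sign_prod_mset_diff:
  fixes a :: real
  assumes "a \<notin># M"
  shows "0 < (-1) ^ size {#x \<in># M. a < x#} * (\<Prod>x\<in>#M. a - x)"
  using assms
proof (induction M)
  case (add x M)
  then have IH: "0 < (-1) ^ size {#x \<in># M. a < x#} * (\<Prod>x\<in>#M. a - x)" and "x \<noteq> a"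
    by auto
  show ?case
  proof (cases "a < x")
    case True
    with IH have "0 < (x - a) * ((-1) ^ size {#x \<in># M. a < x#} * (\<Prod>x\<in>#M. a - x))"
      by simp
    with True show ?thesis
      by (simp add: algebra_simps)
  next
    case False
    with \<open>x \<noteq> a\<close> IH have "0 < (a - x) * ((-1) ^ size {#x \<in># M. a < x#} * (\<Prod>x\<in>#M. a - x))"
      by simp
    with False show ?thesis
      by (simp add: ac_simps)
  qed
qed simp

lemma eventually_poly_pos_at_top:
  fixes p :: "real poly"
  assumes "lead_coeff p > 0"
  shows "eventually (\<lambda>x. 0 < poly p x) at_top"
proof -
  obtain N where N: "\<And>x. N \<le> x \<Longrightarrow> lead_coeff p \<le> poly p x"
    using poly_pinfty_gt_lc[OF assms] by blast
  have "0 < poly p x" if "N \<le> x" for x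
    using N[OF that] assms by linarith
  then show ?thesis
    by (auto simp: eventually_at_top_linorder)
qed

lemma eventually_poly_sign_at_bot:
  fixes p :: "real poly"
  assumes "lead_coeff p > 0"
  shows "eventually (\<lambda>x. 0 < (-1) ^ degree p * poly p x) at_bot"
proof -
  define q where "q = smult ((-1) ^ degree p) (pcompose p [:0, -1:])"
  have "lead_coeff (pcompose p [:0, -1:]) = lead_coeff p * (-1) ^ degree p"
    by (subst lead_coeff_comp) simp_all
  then have "lead_coeff q = lead_coeff p"
    by (simp add: q_def degree_pcompose power_mult_distrib[symmetric])
  then obtain N where N: "\<And>y. N \<le> y \<Longrightarrow> 0 < poly q y"
    using eventually_poly_pos_at_top[of q] assms by (auto simp: eventually_at_top_linorder)
  have "0 < (-1) ^ degree p * poly p x" if "x \<le> - N" for x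
    using N[of "- x"] that by (simp add: q_def poly_pcompose)
  then show ?thesis
    by (auto simp: eventually_at_bot_linorder)
qed

lemma size_proots_atMost_step:
  fixes Q :: "real poly"
  assumes "Q \<noteq> 0" "a < b" "poly Q a * poly Q b \<le> 0"
    and at_a: "k + of_bool (poly Q a = 0) \<le> size {#x \<in># proots Q. x \<le> a#}"
  shows "k + (if poly Q b = 0 then Suc (count (proots (pderiv Q)) b) else 1)
    \<le> size {#x \<in># proots Q. x \<le> b#}"
proof -
  have split: "size {#x \<in># proots Q. x \<le> b#}
      = size {#x \<in># proots Q. x \<le> a#} + size {#x \<in># proots Q. a < x \<and> x < b#} + count (proots Q) b"
    using \<open>a < b\<close> by (rule size_filter_mset_atMost_split)
  show ?thesis
  proof (cases "poly Q b = 0")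
    case True
    with at_a split count_proots_pderiv[OF \<open>Q \<noteq> 0\<close> True] show ?thesis
      by simp
  next
    case False
    show ?thesis
    proof (cases "poly Q a = 0")
      case True
      with at_a split False show ?thesis
        by simp
    next
      case False
      with \<open>poly Q b \<noteq> 0\<close> assms(3) have "poly Q a * poly Q b < 0"
        by (simp add: order_less_le)
      then obtain x where "a < x" "x < b" "poly Q x = 0"
        using poly_IVT[OF \<open>a < b\<close>] by blast
      with \<open>Q \<noteq> 0\<close> have "0 < size {#x \<in># proots Q. a < x \<and> x < b#}"
        by (auto simp: nonempty_has_size[symmetric])
      with at_a split False \<open>poly Q b \<noteq> 0\<close> show ?thesis
        by simp
    qed
  qed
qed

section \<open>Critical values of a polynomial with real-rooted derivative\<close>

lemma mult_nonpos_if_alternating: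
  fixes x y :: real
  assumes "(-1) ^ Suc m * x \<le> 0" "(-1) ^ m * y \<le> 0"
  shows "x * y \<le> 0"
proof -
  have "0 \<le> ((-1) ^ Suc m * x) * ((-1) ^ m * y)"
    using assms by (rule mult_nonpos_nonpos)
  also have "\<dots> = - (x * y)"
    by (simp add: algebra_simps flip: power_add)
  finally show ?thesis
    by simp
qed

locale sorted_critical_points =
  fixes Q :: "real poly" and c :: real and n :: nat and mu :: "nat \<Rightarrow> real"
  assumes pderiv_eq: "pderiv Q = smult c (\<Prod>i\<in>{1..n}. [:-mu i, 1:])"
    and c_pos: "0 < c"
    and mu_sorted: "\<And>i j. 1 \<le> i \<Longrightarrow> i \<le> j \<Longrightarrow> j \<le> n \<Longrightarrow> mu i \<le> mu j"
begin

lemma proots_pderiv: "proots (pderiv Q) = image_mset mu (mset_set {1..n})"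
proof -
  have "proots (pderiv Q) = (\<Sum>i\<in>{1..n}. proots [:-mu i, 1:])"
    using c_pos by (simp add: pderiv_eq proots_prod)
  also have "\<dots> = image_mset mu (mset_set {1..n})"
    by (induction n) (simp_all add: atLeastAtMostSuc_conv add.commute)
  finally show ?thesis .
qed

lemma size_filter_proots_pderiv:
  "size {#x \<in># proots (pderiv Q). P x#} = card {i \<in> {1..n}. P (mu i)}"
  by (simp add: proots_pderiv size_filter_image_mset_set)

lemma count_proots_pderiv_eq_card: "count (proots (pderiv Q)) t = card {i \<in> {1..n}. mu i = t}"
  using size_filter_proots_pderiv[of "\<lambda>x. x = t"] by (simp add: filter_eq_replicate_mset)

lemma degree_pderiv_eq: "degree (pderiv Q) = n"
  using c_pos by (simp add: pderiv_eq degree_prod_sum_eq)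

lemma lead_coeff_pderiv: "lead_coeff (pderiv Q) = c"
  by (simp only: pderiv_eq lead_coeff_smult lead_coeff_prod) simp

lemma degree_eq: "degree Q = Suc n"
proof -
  have "pderiv Q \<noteq> 0"
    using c_pos by (simp add: pderiv_eq)
  then show ?thesis
    using degree_pderiv_eq by (simp add: degree_pderiv pderiv_eq_0_iff)
qed

lemma nonzero: "Q \<noteq> 0"
  using degree_eq by auto

lemma lead_coeff_pos: "0 < lead_coeff Q"
proof -
  have "c = of_nat (Suc n) * lead_coeff Q"
    using lead_coeff_pderiv coeff_pderiv[of Q n] by (simp add: degree_pderiv_eq degree_eq)
  with c_pos show ?thesis
    by (simp add: zero_less_mult_iff)
qed

lemma alternating_if_real_rooted:
  assumes "real_rooted Q" "i \<in> {1..n}"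
  shows "(-1) ^ (n - i) * poly Q (mu i) \<le> 0"
proof (cases "poly Q (mu i) = 0")
  case False
  define a where "a = mu i"
  define R where "R = proots Q"
  have "a \<notin># R"
    using False by (simp add: a_def R_def nonzero)
  have "size R = Suc n"
    using assms(1) by (simp add: R_def real_rooted_iff_size_proots degree_eq)
  have "card {j \<in> {1..n}. mu j < a} \<le> card {1..<i}"
    using assms(2) mu_sorted[of i] by (intro card_mono) (auto simp: a_def not_le[symmetric])
  then have below: "size {#x \<in># R. x < a#} \<le> i"
    using size_proots_on_connected_le[OF nonzero connected_Iio, of a]
      size_filter_proots_pderiv[of "\<lambda>x. x < a"]
      assms(2) by (simp add: R_def) linarith
  have "card {j \<in> {1..n}. a < mu j} \<le> card {Suc i..n}"
  proof (intro card_mono subsetI)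
    fix j assume "j \<in> {j \<in> {1..n}. a < mu j}"
    then show "j \<in> {Suc i..n}"
      using assms(2) mu_sorted[of j i] by (cases "j \<le> i") (auto simp: a_def)
  qed simp
  then have above: "size {#x \<in># R. a < x#} \<le> Suc (n - i)"
    using size_proots_on_connected_le[OF nonzero connected_Ioi, of a]
      size_filter_proots_pderiv[of "\<lambda>x. a < x"]
    by (simp add: R_def)
  have "size {#x \<in># R. x < a#} + size {#x \<in># R. a < x#} = Suc n"
    using size_filter_mset_less_greater[of R a] \<open>size R = Suc n\<close> \<open>a \<notin># R\<close> by (simp add: not_in_iff)
  with below above assms(2) have roots_above: "size {#x \<in># R. a < x#} = Suc (n - i)"
    by auto
  have "poly Q a = lead_coeff Q * (\<Prod>x\<in>#R. a - x)"
    by (subst real_rooted_factorization[OF assms(1)]) (simp add: R_def poly_prod_mset)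
  moreover have "(-1) ^ (n - i) * (\<Prod>x\<in>#R. a - x) < 0"
    using sign_prod_mset_diff[OF \<open>a \<notin># R\<close>] roots_above by simp
  ultimately show ?thesis
    using lead_coeff_pos
    by (simp add: a_def mult.left_commute[of "(-1) ^ (n - i)"] mult_nonneg_nonpos)
qed simp

lemma zero_at_repeated_critical_point:
  assumes alt: "\<And>i. i \<in> {1..n} \<Longrightarrow> (-1) ^ (n - i) * poly Q (mu i) \<le> 0"
    and "1 \<le> i" "i < n" "mu i = mu (Suc i)"
  shows "poly Q (mu i) = 0"
proof -
  have "n - i = Suc (n - Suc i)"
    using \<open>i < n\<close> by simp
  then have "(-1) ^ Suc (n - Suc i) * poly Q (mu i) \<le> 0"
    using alt[of i] assms(2,3) by simp
  moreover have "(-1) ^ (n - Suc i) * poly Q (mu i) \<le> 0"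
    using alt[of "Suc i"] assms(2-4) by simp
  ultimately have "poly Q (mu i) * poly Q (mu i) \<le> 0"
    by (rule mult_nonpos_if_alternating)
  then show ?thesis
    by (metis mult_eq_0_iff order_antisym zero_le_square)
qed

lemma count_proots_pderiv_eq_1_at_nonroot:
  assumes alt: "\<And>i. i \<in> {1..n} \<Longrightarrow> (-1) ^ (n - i) * poly Q (mu i) \<le> 0"
    and "j \<in> {1..n}" "poly Q (mu j) \<noteq> 0"
  shows "count (proots (pderiv Q)) (mu j) = 1"
proof -
  have "l = j" if "l \<in> {1..n}" "mu l = mu j" for l
  proof (rule ccontr)
    assume "l \<noteq> j"
    define i where "i = min l j"
    have "mu i \<le> mu (Suc i)" "mu (Suc i) \<le> mu (max l j)"
      using \<open>l \<noteq> j\<close> that(1) assms(2) mu_sorted by (auto simp: i_def)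
    moreover have "mu i = mu j" "mu (max l j) = mu j"
      using that(2) by (auto simp: i_def min_def max_def)
    ultimately have "poly Q (mu i) = 0"
      using \<open>l \<noteq> j\<close> that(1) assms(2)
      by (intro zero_at_repeated_critical_point[OF alt]) (auto simp: i_def)
    with \<open>mu i = mu j\<close> assms(3) show False
      by simp
  qed
  then have "{i \<in> {1..n}. mu i = mu j} = {j}"
    using assms(2) by auto
  then show ?thesis
    by (simp add: count_proots_pderiv_eq_card)
qed

lemma roots_le_next_critical_point:
  assumes alt: "\<And>i. i \<in> {1..n} \<Longrightarrow> (-1) ^ (n - i) * poly Q (mu i) \<le> 0"
    and "j \<in> {1..n}" "a < mu j" "poly Q a * poly Q (mu j) \<le> 0"
    and between: "\<And>i. i \<in> {1..n} \<Longrightarrow> a < mu i \<Longrightarrow> mu j \<le> mu i"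
    and at_a: "size {#x \<in># proots (pderiv Q). x \<le> a#} + of_bool (poly Q a = 0)
      \<le> size {#x \<in># proots Q. x \<le> a#}"
  shows "size {#x \<in># proots (pderiv Q). x \<le> mu j#} + of_bool (poly Q (mu j) = 0)
    \<le> size {#x \<in># proots Q. x \<le> mu j#}"
proof -
  let ?K = "proots (pderiv Q)"
  have "{i \<in> {1..n}. a < mu i \<and> mu i < mu j} = {}"
    using between by force
  then have "size {#x \<in># ?K. x \<le> mu j#} = size {#x \<in># ?K. x \<le> a#} + count ?K (mu j)"
    using size_filter_mset_atMost_split[OF \<open>a < mu j\<close>, of ?K]
    by (simp add: size_filter_proots_pderiv)
  moreover have "size {#x \<in># ?K. x \<le> a#} + (if poly Q (mu j) = 0 then Suc (count ?K (mu j)) else 1)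
      \<le> size {#x \<in># proots Q. x \<le> mu j#}"
    using nonzero assms(3,4) at_a by (rule size_proots_atMost_step)
  ultimately show ?thesis
    using count_proots_pderiv_eq_1_at_nonroot[OF alt \<open>j \<in> {1..n}\<close>]
    by (cases "poly Q (mu j) = 0") auto
qed

text \<open>Setting mu 0 = x0 lets the induction start at index 0: x0 lies left of all critical points,
  and Q(x0) has the sign that the pattern prescribes for index 0.\<close>

lemma roots_le_critical_point:
  assumes alt: "\<And>i. i \<in> {1..n} \<Longrightarrow> (-1) ^ (n - i) * poly Q (mu i) \<le> 0"
    and x0: "x0 < mu 1" "(-1) ^ n * poly Q x0 < 0"
    and "i \<le> n"
  defines "\<nu> \<equiv> mu(0 := x0)"
  shows "size {#x \<in># proots (pderiv Q). x \<le> \<nu> i#} + of_bool (poly Q (\<nu> i) = 0)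
    \<le> size {#x \<in># proots Q. x \<le> \<nu> i#}"
  using \<open>i \<le> n\<close>
proof (induction i)
  case 0
  have "{i \<in> {1..n}. mu i \<le> x0} = {}"
    using mu_sorted[of 1] x0(1) by force
  then have no_critical_points: "size {#x \<in># proots (pderiv Q). x \<le> x0#} = 0"
    by (simp only: size_filter_proots_pderiv card.empty)
  have "poly Q x0 \<noteq> 0"
    using x0(2) by auto
  then show ?case
    by (simp add: \<nu>_def no_critical_points)
next
  case (Suc i)
  have \<nu>_sorted: "\<nu> l \<le> \<nu> m" if "l \<le> m" "m \<le> n" for l m
    using that mu_sorted[of l m] mu_sorted[of 1 m] x0(1) by (auto simp: \<nu>_def)
  show ?case
  proof (cases "\<nu> i = \<nu> (Suc i)")
    case True
    with Suc show ?thesis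
      by simp
  next
    case False
    with \<nu>_sorted[of i "Suc i"] Suc.prems have less: "\<nu> i < mu (Suc i)"
      by (simp add: \<nu>_def)
    have "n - i = Suc (n - Suc i)"
      using Suc.prems by simp
    then have "(-1) ^ Suc (n - Suc i) * poly Q (\<nu> i) \<le> 0"
      using alt[of i] x0(2) by (cases "i = 0") (auto simp: \<nu>_def)
    moreover have "(-1) ^ (n - Suc i) * poly Q (mu (Suc i)) \<le> 0"
      using alt[of "Suc i"] Suc.prems by simp
    ultimately have "poly Q (\<nu> i) * poly Q (mu (Suc i)) \<le> 0"
      by (rule mult_nonpos_if_alternating)
    moreover have "mu (Suc i) \<le> mu l" if "l \<in> {1..n}" "\<nu> i < mu l" for l
      using that Suc.prems \<nu>_sorted[of l i] \<nu>_sorted[of "Suc i" l]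
      by (cases "l \<le> i") (auto simp: \<nu>_def)
    ultimately show ?thesis
      using roots_le_next_critical_point[OF alt _ less] Suc by (simp add: \<nu>_def)
  qed
qed

lemma real_rooted_if_alternating:
  assumes alt: "\<And>i. i \<in> {1..n} \<Longrightarrow> (-1) ^ (n - i) * poly Q (mu i) \<le> 0"
  shows "real_rooted Q"
proof -
  have "eventually (\<lambda>x. x < mu 1 \<and> (-1) ^ n * poly Q x < 0) at_bot"
    using eventually_poly_sign_at_bot[OF lead_coeff_pos]
    by (simp add: degree_eq eventually_conj_iff)
  then obtain x0 where x0: "x0 < mu 1" "(-1) ^ n * poly Q x0 < 0"
    by (auto simp: eventually_at_bot_linorder)
  define t where "t = (mu(0 := x0)) n"
  have "eventually (\<lambda>x. t < x \<and> 0 < poly Q x) at_top"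
    using eventually_poly_pos_at_top[OF lead_coeff_pos] by (simp add: eventually_conj_iff)
  then obtain x1 where "t < x1" "0 < poly Q x1"
    by (auto simp: eventually_at_top_linorder)
  have "{i \<in> {1..n}. mu i \<le> t} = {1..n}"
    using mu_sorted[of _ n] by (auto simp: t_def)
  then have "n + of_bool (poly Q t = 0) \<le> size {#x \<in># proots Q. x \<le> t#}"
    using roots_le_critical_point[OF alt x0 order_refl]
    by (simp add: t_def size_filter_proots_pderiv)
  moreover have "poly Q t \<le> 0"
    using alt[of n] x0(2) by (cases "n = 0") (auto simp: t_def)
  ultimately have "n + 1 \<le> size {#x \<in># proots Q. x \<le> x1#}"
    using size_proots_atMost_step[OF nonzero \<open>t < x1\<close>] \<open>0 < poly Q x1\<close>
    by (fastforce simp: mult_nonpos_nonneg)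
  also have "\<dots> \<le> size (proots Q)"
    by (rule size_filter_mset_lesseq)
  finally show ?thesis
    using size_proots_le[of Q] by (simp add: real_rooted_iff_size_proots nonzero degree_eq)
qed

theorem real_rooted_iff_alternating:
  "real_rooted Q \<longleftrightarrow> (\<forall>i \<in> {1..n}. (-1) ^ (n - i) * poly Q (mu i) \<le> 0)"
  using alternating_if_real_rooted real_rooted_if_alternating by blast

end

section \<open>Order statistics\<close>

lemma order_statistic_iff_card:
  fixes hs :: "nat \<Rightarrow> 'a::linorder"
  assumes sorted: "\<And>i j. 1 \<le> i \<Longrightarrow> i \<le> j \<Longrightarrow> j \<le> n \<Longrightarrow> hs i \<le> hs j"
    and "k \<in> {1..n}" and down_closed: "\<And>x y. P y \<Longrightarrow> x \<le> y \<Longrightarrow> P x"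
  shows "P (hs k) \<longleftrightarrow> k \<le> card {j \<in> {1..n}. P (hs j)}"
proof
  assume "P (hs k)"
  then have "{1..k} \<subseteq> {j \<in> {1..n}. P (hs j)}"
    using assms by auto
  then show "k \<le> card {j \<in> {1..n}. P (hs j)}"
    using card_mono[of "{j \<in> {1..n}. P (hs j)}" "{1..k}"] by simp
next
  assume k_le: "k \<le> card {j \<in> {1..n}. P (hs j)}"
  show "P (hs k)"
  proof (rule ccontr)
    assume "\<not> P (hs k)"
    have "j < k" if "j \<in> {1..n}" "P (hs j)" for j
    proof (rule ccontr)
      assume "\<not> j < k"
      then have "hs k \<le> hs j"
        using sorted \<open>k \<in> {1..n}\<close> that(1) by simp
      with \<open>\<not> P (hs k)\<close> that(2) down_closed show False
        by blast
    qed
    then have "card {j \<in> {1..n}. P (hs j)} \<le> card {1..<k}"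
      by (intro card_mono) auto
    with k_le \<open>k \<in> {1..n}\<close> show False
      by simp arith
  qed
qed

lemma all_le_iff_card_le:
  fixes g :: "nat \<Rightarrow> 'a::linorder"
  assumes "L \<subseteq> {1..n}" and separated: "\<And>i j. i \<in> L \<Longrightarrow> j \<in> {1..n} - L \<Longrightarrow> g i \<le> g j"
  shows "(\<forall>i \<in> L. g i \<le> C) \<longleftrightarrow> card L \<le> card {j \<in> {1..n}. g j \<le> C}"
proof
  assume "\<forall>i \<in> L. g i \<le> C"
  with \<open>L \<subseteq> {1..n}\<close> show "card L \<le> card {j \<in> {1..n}. g j \<le> C}"
    by (intro card_mono) auto
next
  assume card_le: "card L \<le> card {j \<in> {1..n}. g j \<le> C}"
  show "\<forall>i \<in> L. g i \<le> C"
  proof (rule ccontr)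
    assume "\<not> (\<forall>i \<in> L. g i \<le> C)"
    then obtain i where "i \<in> L" "C < g i"
      by auto
    with separated have "{j \<in> {1..n}. g j \<le> C} \<subseteq> L - {i}"
      by force
    moreover have "finite L"
      using \<open>L \<subseteq> {1..n}\<close> finite_subset by blast
    ultimately have "card {j \<in> {1..n}. g j \<le> C} < card L"
      using \<open>i \<in> L\<close> by (metis card_Diff1_less card_mono finite_Diff le_less_trans)
    with card_le show False
      by simp
  qed
qed

lemma all_ge_iff_card_less_le:
  fixes g :: "nat \<Rightarrow> 'a::linorder"
  assumes "L \<subseteq> {1..n}" and separated: "\<And>i j. i \<in> L \<Longrightarrow> j \<in> {1..n} - L \<Longrightarrow> g i \<le> g j"
  shows "(\<forall>j \<in> {1..n} - L. C \<le> g j) \<longleftrightarrow> card {j \<in> {1..n}. g j < C} \<le> card L"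
proof
  assume "\<forall>j \<in> {1..n} - L. C \<le> g j"
  then show "card {j \<in> {1..n}. g j < C} \<le> card L"
    using \<open>L \<subseteq> {1..n}\<close> finite_subset by (intro card_mono) (auto simp: not_le[symmetric])
next
  assume card_le: "card {j \<in> {1..n}. g j < C} \<le> card L"
  show "\<forall>j \<in> {1..n} - L. C \<le> g j"
  proof (rule ccontr)
    assume "\<not> (\<forall>j \<in> {1..n} - L. C \<le> g j)"
    then obtain j where j: "j \<in> {1..n} - L" "g j < C"
      by auto
    with separated \<open>L \<subseteq> {1..n}\<close> have "insert j L \<subseteq> {j \<in> {1..n}. g j < C}"
      by force
    then have "card (insert j L) \<le> card {j \<in> {1..n}. g j < C}"
      by (intro card_mono) auto
    with card_le j(1) \<open>L \<subseteq> {1..n}\<close> show False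
      by (simp add: finite_subset)
  qed
qed

lemma threshold_between_order_statistics:
  fixes g hs :: "nat \<Rightarrow> 'a::linorder"
  assumes hs_sorted: "\<And>i j. 1 \<le> i \<Longrightarrow> i \<le> j \<Longrightarrow> j \<le> n \<Longrightarrow> hs i \<le> hs j"
    and same_counts: "\<And>P. card {j \<in> {1..n}. P (hs j)} = card {j \<in> {1..n}. P (g j)}"
    and L: "L \<subseteq> {1..n}" "card L = k" "1 \<le> k" "k < n"
    and separated: "\<And>i j. i \<in> L \<Longrightarrow> j \<in> {1..n} - L \<Longrightarrow> g i \<le> g j"
  shows "(\<forall>i \<in> L. g i \<le> C) \<and> (\<forall>i \<in> {1..n} - L. C \<le> g i) \<longleftrightarrow> hs k \<le> C \<and> C \<le> hs (Suc k)"
proof -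
  have "hs k \<le> C \<longleftrightarrow> k \<le> card {j \<in> {1..n}. g j \<le> C}"
    using order_statistic_iff_card[where n = n and hs = hs and k = k and P = "\<lambda>x. x \<le> C"]
      hs_sorted L(3,4)
      same_counts[of "\<lambda>x. x \<le> C"] by simp
  moreover have "hs (Suc k) < C \<longleftrightarrow> Suc k \<le> card {j \<in> {1..n}. g j < C}"
    using order_statistic_iff_card[where n = n and hs = hs and k = "Suc k" and P = "\<lambda>x. x < C"]
      hs_sorted L(4)
      same_counts[of "\<lambda>x. x < C"] by simp
  ultimately show ?thesis
    using all_le_iff_card_le[OF L(1) separated] all_ge_iff_card_less_le[OF L(1) separated] L(2)
    by (auto simp: not_less[symmetric])
qed

section \<open>Real-rooted vertical shifts of an antiderivative\<close>

lemma pderiv_poly_antideriv: "pderiv (poly_antideriv p) = p"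
proof (rule poly_eqI)
  fix i
  show "coeff (pderiv (poly_antideriv p)) i = coeff p i"
    by (cases "i \<le> degree p")
      (simp_all add: coeff_pderiv poly_antideriv_def nth_default_def coeff_eq_0 del: upt_Suc)
qed

lemma card_odd_diff: "card {i \<in> {1..n}. odd (n - i)} = n div 2"
proof -
  have "{i \<in> {1..n}. odd (n - i)} = (\<lambda>j. n - j) ` {j. j < n \<and> odd j}"
  proof (intro equalityI subsetI)
    fix i assume "i \<in> {i \<in> {1..n}. odd (n - i)}"
    then show "i \<in> (\<lambda>j. n - j) ` {j. j < n \<and> odd j}"
      by (intro image_eqI[of _ _ "n - i"]) auto
  qed auto
  moreover have "inj_on (\<lambda>j. n - j) {j. j < n \<and> odd j}"
    by (auto simp: inj_on_def)
  moreover have "card {j. j < n \<and> odd j} = n div 2"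
  proof (induction n)
    case (Suc n)
    have "{j. j < Suc n \<and> odd j}
        = (if odd n then insert n {j. j < n \<and> odd j} else {j. j < n \<and> odd j})"
      by (auto simp: less_Suc_eq)
    then show ?case
      using Suc by simp
  qed simp
  ultimately show ?thesis by (simp add: card_image)
qed

lemma real_rooted_poly_antideriv_plus_const_iff:
  fixes p :: "real poly" and mu :: "nat \<Rightarrow> real"
  assumes "lead_coeff p > 0"
    and "\<And>i j. 1 \<le> i \<Longrightarrow> i \<le> j \<Longrightarrow> j \<le> n \<Longrightarrow> mu i \<le> mu j"
    and "p = smult (lead_coeff p) (\<Prod>i\<in>{1..n}. [:- mu i, 1:])"
  defines "L \<equiv> {i \<in> {1..n}. odd (n - i)}"
  shows "real_rooted (poly_antideriv p + [:D:]) \<longleftrightarrow>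
    (\<forall>i \<in> L. - poly (poly_antideriv p) (mu i) \<le> D) \<and>
    (\<forall>i \<in> {1..n} - L. D \<le> - poly (poly_antideriv p) (mu i))"
proof -
  interpret sorted_critical_points "poly_antideriv p + [:D:]" "lead_coeff p" n mu
    using assms by unfold_locales (simp_all add: pderiv_add pderiv_poly_antideriv)
  have "(-1) ^ (n - i) * poly (poly_antideriv p + [:D:]) (mu i) \<le> 0 \<longleftrightarrow>
      (if i \<in> L then - poly (poly_antideriv p) (mu i) \<le> D
       else D \<le> - poly (poly_antideriv p) (mu i))"
    if "i \<in> {1..n}" for i
    using that by (auto simp: L_def minus_one_power_iff)
  then show ?thesis
    unfolding real_rooted_iff_alternating by (auto simp: L_def)
qed

theorem theorem2p6:
  fixes p :: "real poly" and n :: nat and mu :: "nat \<Rightarrow> real"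
    and hs :: "nat \<Rightarrow> real" and h C :: real
  assumes rr: "real_rooted p"
    and deg: "degree p = n" and n2: "n \<ge> 2"
    and lc: "lead_coeff p > 0"
    and mu_sorted: "\<And>i j. 1 \<le> i \<Longrightarrow> i \<le> j \<Longrightarrow> j \<le> n \<Longrightarrow> mu i \<le> mu j"
    and mu_roots: "p = smult (lead_coeff p) (\<Prod>i\<in>{1..n}. [:- mu i, 1:])"
    and hs_sorted: "\<And>i j. 1 \<le> i \<Longrightarrow> i \<le> j \<Longrightarrow> j \<le> n \<Longrightarrow> hs i \<le> hs j"
    and hs_mset: "mset (map hs [1..<Suc n]) =
                  mset (map (\<lambda>i. - poly (poly_antideriv p) (mu i)) [1..<Suc n])"
    and h_bounds: "hs (n div 2) \<le> h" "h \<le> hs (n div 2 + 1)"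
    and Ph: "real_rooted (poly_antideriv p + [:h:])"
  shows "real_rooted (poly_antideriv p + [:C:]) \<longleftrightarrow>
           hs (n div 2) \<le> C \<and> C \<le> hs (n div 2 + 1)"
proof -
  define g where "g i = - poly (poly_antideriv p) (mu i)" for i
  define L where "L = {i \<in> {1..n}. odd (n - i)}"
  have shift: "real_rooted (poly_antideriv p + [:D:]) \<longleftrightarrow>
      (\<forall>i \<in> L. g i \<le> D) \<and> (\<forall>i \<in> {1..n} - L. D \<le> g i)" for D
    using real_rooted_poly_antideriv_plus_const_iff[OF lc mu_sorted mu_roots, folded L_def]
    by (simp add: g_def)
  have "map g [1..<Suc n] = map (\<lambda>i. - poly (poly_antideriv p) (mu i)) [1..<Suc n]"
    by (simp add: g_def)
  then have counts: "card {j \<in> {1..n}. P (hs j)} = card {j \<in> {1..n}. P (g j)}" for P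
    using hs_mset by (simp only: card_eq_size_filter_mset_map_upt)
  have "card L = n div 2"
    unfolding L_def by (rule card_odd_diff)
  moreover have "L \<subseteq> {1..n}" "1 \<le> n div 2" "n div 2 < n"
    using n2 by (auto simp: L_def)
  moreover have "g i \<le> g j" if "i \<in> L" "j \<in> {1..n} - L" for i j
    using Ph that unfolding shift by force
  ultimately show ?thesis
    unfolding shift
    using threshold_between_order_statistics[where hs = hs and g = g and L = L, OF hs_sorted counts]
    by simp
qed

end
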